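(* Let $\lambda\in\mathbb{R}$, $\alpha=1-\lambda$, and let $\mathcal{Q}_\lambda$ be the $\lambda$-exponential family with sufficient statistic $T$ and base measure $m$. Assume that $\alpha>0$ and that $\varphi_\lambda$ is proper. Let $\vartheta\in\operatorname{dom}\varphi_\lambda$ and $p\in\mathcal{P}(\mathcal{X},m)$. If $p$ is $q_\vartheta$-compatible, then $c_\lambda\big(\vartheta,\,p^{(\alpha)}_{|S_\vartheta}(T)\big)\in\mathbb{R}$.
   Context: $\mathcal{H}$ is a finite-dimensional real Hilbert space with inner product $\langle\cdot,\cdot\rangle$; $\mathcal{X}$ is a measurable space (Borel $\sigma$-algebra) with a measure $m$; $\mathcal{P}(\mathcal{X},m)$ is the set of probability distributions having a density with respect to $m$ (identified with their densities). For a density $p$ and measurable $f$ (possibly $\mathcal H$-valued), $p(f)=\int f(x)p(x)\,m(dx)$. Conventions: $\log s=-\infty$ for $s\le 0$ and $\exp(-\infty)=0$. The coupling is $c_\lambda(u,v)=\frac1\lambda\log(1+\lambda\langle u,v\rangle)$ for $\lambda\neq0$ and $c_0(u,v)=\langle u,v\rangle$. Given a measurable $T:\mathcal X\to\mathcal H$, the $\lambda$-log-partition function is $\varphi_\lambda(\vartheta)=\log\int\exp(c_\lambda(\vartheta,T(x)))\,m(dx)$, $\operatorname{dom}\varphi_\lambda=\{\vartheta\in\mathcal H:\varphi_\lambda(\vartheta)<+\infty\}$, and for $\vartheta\in\operatorname{dom}\varphi_\lambda$, $q_\vartheta(x)=\exp(c_\lambda(\vartheta,T(x))-\varphi_\lambda(\vartheta))$;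 $\mathcal Q_\lambda=\{q_\vartheta:\vartheta\in\operatorname{dom}\varphi_\lambda\}$. $\varphi_\lambda$ proper means it never takes the value $-\infty$ and $\operatorname{dom}\varphi_\lambda\neq\emptyset$. The support of $q_\vartheta$ is $S_\vartheta=\{x\in\mathcal X:1+\lambda\langle\vartheta,T(x)\rangle>0\}$ (equal to $\mathcal X$ when $\lambda=0$). For $Y\subset\mathcal X$, $p_{|Y}=p\,\mathbf 1_Y$ is the restriction of $p$ to $Y$. For $\alpha>0$ the escort of a nonnegative function $p$ is $p^{(\alpha)}=p^\alpha/\int p^\alpha\,dm$ (when the normalizing constant is finite and positive), and $p^{(\alpha)}_{|Y}$ denotes the escort of $p_{|Y}$. A density $p$ is $q_\vartheta$-compatible if $\int p_{|S_\vartheta}(x)^\alpha m(dx)\in(0,+\infty)$ and $\int T(x)p_{|S_\vartheta}(x)^\alpha m(dx)$ has finite components. *)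

theory Defs
  imports "HOL-Analysis.Analysis" "HOL-Probability.Probability"
begin

definition eln :: "real \<Rightarrow> ereal" where
  "eln s = (if s > 0 then ereal (ln s) else -\<infinity>)"

definition eexp :: "ereal \<Rightarrow> ennreal" where
  "eexp t = (if t = -\<infinity> then 0 else if t = \<infinity> then \<infinity> else ennreal (exp (real_of_ereal t)))"

definition coupling :: "real \<Rightarrow> 'h::real_inner \<Rightarrow> 'h \<Rightarrow> ereal" where
  "coupling l u v = (if l = 0 then ereal (u \<bullet> v) else ereal (1 / l) * eln (1 + l * (u \<bullet> v)))"

definition log_partition :: "real \<Rightarrow> 'x measure \<Rightarrow> ('x \<Rightarrow> 'h::real_inner) \<Rightarrow> 'h \<Rightarrow> ereal" where
  "log_partition l M T \<theta> =
     (let I = (\<integral>\<^sup>+ x. eexp (coupling l \<theta> (T x)) \<partial>M) in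
      if I = 0 then -\<infinity> else if I = \<infinity> then \<infinity> else ereal (ln (enn2real I)))"

definition dom_lp :: "real \<Rightarrow> 'x measure \<Rightarrow> ('x \<Rightarrow> 'h::real_inner) \<Rightarrow> 'h set" where
  "dom_lp l M T = {\<theta>. log_partition l M T \<theta> < \<infinity>}"

definition proper_lp :: "real \<Rightarrow> 'x measure \<Rightarrow> ('x \<Rightarrow> 'h::real_inner) \<Rightarrow> bool" where
  "proper_lp l M T \<longleftrightarrow> (\<forall>\<theta>. log_partition l M T \<theta> \<noteq> -\<infinity>) \<and> dom_lp l M T \<noteq> {}"

definition supp_q :: "real \<Rightarrow> 'x measure \<Rightarrow> ('x \<Rightarrow> 'h::real_inner) \<Rightarrow> 'h \<Rightarrow> 'x set" where
  "supp_q l M T \<theta> = {x \<in> space M. 1 + l * (\<theta> \<bullet> T x) > 0}"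

definition densities :: "'x measure \<Rightarrow> ('x \<Rightarrow> real) set" where
  "densities M = {p. p \<in> borel_measurable M \<and> (\<forall>x\<in>space M. 0 \<le> p x) \<and>
                       (\<integral>\<^sup>+ x. ennreal (p x) \<partial>M) = 1}"

definition restr :: "('x \<Rightarrow> real) \<Rightarrow> 'x set \<Rightarrow> 'x \<Rightarrow> real" where
  "restr p Y x = p x * indicator Y x"

definition escort :: "'x measure \<Rightarrow> real \<Rightarrow> ('x \<Rightarrow> real) \<Rightarrow> 'x \<Rightarrow> real" where
  "escort M a p x = p x powr a / enn2real (\<integral>\<^sup>+ y. ennreal (p y powr a) \<partial>M)"

definition compatible :: "real \<Rightarrow> 'x measure \<Rightarrow> ('x \<Rightarrow> 'h::euclidean_space) \<Rightarrow> 'h \<Rightarrow> ('x \<Rightarrow> real) \<Rightarrow> bool" where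
  "compatible l M T \<theta> p \<longleftrightarrow>
     (let a = 1 - l; q = restr p (supp_q l M T \<theta>) in
       0 < (\<integral>\<^sup>+ x. ennreal (q x powr a) \<partial>M) \<and> (\<integral>\<^sup>+ x. ennreal (q x powr a) \<partial>M) < \<infinity> \<and>
       (\<forall>b\<in>Basis. integrable M (\<lambda>x. (T x \<bullet> b) * q x powr a)))"

end

theory Submission
  imports Defs
begin

(*
  The escort w of p restricted to S_theta is a probability density vanishing outside S_theta,
  where the affine function x \<mapsto> 1 + \<lambda> <\<theta>, T x> is positive. Hence its w-mean
  1 + \<lambda> <\<theta>, w(T)> is positive, so the logarithm in c_\<lambda>(\<theta>, w(T)) is finite.
*)

lemma integrable_euclidean_componentwise:
  fixes g :: "'a \<Rightarrow> 'h::euclidean_space"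
  assumes "\<And>b. b \<in> Basis \<Longrightarrow> integrable M (\<lambda>x. g x \<bullet> b)"
  shows "integrable M g"
proof -
  have "integrable M (\<lambda>x. \<Sum>b\<in>Basis. (g x \<bullet> b) *\<^sub>R b)"
    using assms by (intro Bochner_Integration.integrable_sum integrable_scaleR_left)
  then show ?thesis
    by (simp add: euclidean_representation)
qed

lemma coupling_finite:
  assumes "0 < 1 + l * (u \<bullet> v)"
  shows "coupling l u v \<noteq> \<infinity> \<and> coupling l u v \<noteq> -\<infinity>"
  using assms by (simp add: coupling_def eln_def)

lemma integral_affine_pos_on_support:
  fixes w :: "'a \<Rightarrow> real" and T :: "'a \<Rightarrow> 'h::{real_inner, banach, second_countable_topology}"
  assumes w_int: "integrable M w" and w_nonneg: "AE x in M. 0 \<le> w x"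
    and w_prob: "integral\<^sup>L M w = 1"
    and wT_int: "integrable M (\<lambda>x. w x *\<^sub>R T x)"
    and pos: "AE x in M. w x \<noteq> 0 \<longrightarrow> 0 < c + \<theta> \<bullet> T x"
  shows "0 < c + \<theta> \<bullet> (\<integral>x. w x *\<^sub>R T x \<partial>M)"
proof -
  define h where "h x = c * w x + \<theta> \<bullet> (w x *\<^sub>R T x)" for x
  have h_int: "integrable M h"
    unfolding h_def using w_int wT_int
    by (intro Bochner_Integration.integrable_add integrable_mult_right integrable_inner_right)
  have "integral\<^sup>L M h = c * integral\<^sup>L M w + (\<integral>x. \<theta> \<bullet> (w x *\<^sub>R T x) \<partial>M)"
    unfolding h_def using w_int wT_int
    by (simp add: Bochner_Integration.integral_add integrable_inner_right del: inner_scaleR_right)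
  then have h_integral: "integral\<^sup>L M h = c + \<theta> \<bullet> (\<integral>x. w x *\<^sub>R T x \<partial>M)"
    using wT_int w_prob by (simp del: inner_scaleR_right)
  have h_factor: "h x = w x * (c + \<theta> \<bullet> T x)" for x
    by (simp add: h_def algebra_simps)
  have h_nonneg: "AE x in M. 0 \<le> h x"
    using w_nonneg pos by eventually_elim (auto simp: h_factor)
  have "\<not> (AE x in M. h x = 0)"
  proof
    assume "AE x in M. h x = 0"
    then have "AE x in M. w x = 0"
      using pos by eventually_elim (auto simp: h_factor)
    then have "integral\<^sup>L M w = 0"
      by (rule integral_eq_zero_AE)
    with w_prob show False
      by simp
  qed
  then have "integral\<^sup>L M h \<noteq> 0"
    using integral_nonneg_eq_0_iff_AE[OF h_int h_nonneg] by simp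
  moreover have "0 \<le> integral\<^sup>L M h"
    using h_nonneg by (rule integral_nonneg_AE)
  ultimately show ?thesis
    using h_integral by simp
qed

lemma escort_nonneg: "0 \<le> escort M a q x"
  by (simp add: escort_def)

lemma escort_restr_nonzero_imp_mem: "escort M a (restr p S) x \<noteq> 0 \<Longrightarrow> x \<in> S"
  by (cases "x \<in> S") (simp_all add: escort_def restr_def)

lemma sets_supp_q[measurable]:
  fixes T :: "'a \<Rightarrow> 'h::euclidean_space"
  assumes [measurable]: "T \<in> borel_measurable M"
  shows "supp_q l M T \<theta> \<in> sets M"
  unfolding supp_q_def by measurable

lemma
  fixes q :: "'a \<Rightarrow> real"
  assumes q_meas: "q \<in> borel_measurable M"
    and norm_pos: "0 < (\<integral>\<^sup>+x. ennreal (q x powr a) \<partial>M)"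
    and norm_finite: "(\<integral>\<^sup>+x. ennreal (q x powr a) \<partial>M) < \<infinity>"
  shows integrable_escort: "integrable M (escort M a q)"
    and integral_escort: "integral\<^sup>L M (escort M a q) = 1"
proof -
  define N where "N = (\<integral>\<^sup>+x. ennreal (q x powr a) \<partial>M)"
  have powr_int: "integrable M (\<lambda>x. q x powr a)"
    using q_meas norm_finite by (intro integrableI_nonneg) auto
  have "integral\<^sup>L M (\<lambda>x. q x powr a) = enn2real N"
    unfolding N_def by (rule integral_eq_nn_integral) (use q_meas in auto)
  moreover have "0 < enn2real N"
    using norm_pos norm_finite by (simp add: N_def enn2real_positive_iff)
  moreover have "escort M a q = (\<lambda>x. q x powr a / enn2real N)"
    by (simp add: escort_def N_def fun_eq_iff)
  ultimately show "integrable M (escort M a q)" "integral\<^sup>L M (escort M a q) = 1"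
    using powr_int by simp_all
qed

lemma integrable_escort_scaleR:
  fixes T :: "'a \<Rightarrow> 'h::euclidean_space"
  assumes "\<And>b. b \<in> Basis \<Longrightarrow> integrable M (\<lambda>x. (T x \<bullet> b) * q x powr a)"
  shows "integrable M (\<lambda>x. escort M a q x *\<^sub>R T x)"
proof (rule integrable_euclidean_componentwise)
  fix b :: 'h
  assume "b \<in> Basis"
  then have "integrable M (\<lambda>x. (T x \<bullet> b) * q x powr a / enn2real (\<integral>\<^sup>+y. ennreal (q y powr a) \<partial>M))"
    using assms by simp
  then show "integrable M (\<lambda>x. escort M a q x *\<^sub>R T x \<bullet> b)"
    by (simp add: escort_def mult.commute)
qed

theorem lemma1:
  fixes l :: real and M :: "'x measure" and T :: "'x \<Rightarrow> 'h::euclidean_space"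
    and \<theta> :: 'h and p :: "'x \<Rightarrow> real"
  assumes "T \<in> borel_measurable M"
    and "1 - l > 0"
    and "proper_lp l M T"
    and "\<theta> \<in> dom_lp l M T"
    and "p \<in> densities M"
    and "compatible l M T \<theta> p"
  shows "coupling l \<theta>
           (\<integral>x. escort M (1 - l) (restr p (supp_q l M T \<theta>)) x *\<^sub>R T x \<partial>M) \<noteq> \<infinity>
      \<and> coupling l \<theta>
           (\<integral>x. escort M (1 - l) (restr p (supp_q l M T \<theta>)) x *\<^sub>R T x \<partial>M) \<noteq> -\<infinity>"
proof -
  define S where "S = supp_q l M T \<theta>"
  define w where "w = escort M (1 - l) (restr p S)"
  note [measurable] = assms(1)
  have [measurable]: "p \<in> borel_measurable M"
    using assms(5) by (simp add: densities_def)
  have q_meas: "restr p S \<in> borel_measurable M"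
    unfolding S_def restr_def[abs_def] by measurable
  have norm: "0 < (\<integral>\<^sup>+x. ennreal (restr p S x powr (1 - l)) \<partial>M)"
      "(\<integral>\<^sup>+x. ennreal (restr p S x powr (1 - l)) \<partial>M) < \<infinity>"
    and moments: "\<And>b. b \<in> Basis \<Longrightarrow> integrable M (\<lambda>x. (T x \<bullet> b) * restr p S x powr (1 - l))"
    using assms(6) unfolding compatible_def Let_def S_def by auto
  have "0 < 1 + (l *\<^sub>R \<theta>) \<bullet> (\<integral>x. w x *\<^sub>R T x \<partial>M)"
  proof (rule integral_affine_pos_on_support)
    show "integrable M w" "integral\<^sup>L M w = 1"
      unfolding w_def using q_meas norm by (rule integrable_escort, rule integral_escort)
    show "integrable M (\<lambda>x. w x *\<^sub>R T x)"
      unfolding w_def using moments by (rule integrable_escort_scaleR)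
    show "AE x in M. 0 \<le> w x"
      by (simp add: w_def escort_nonneg)
    show "AE x in M. w x \<noteq> 0 \<longrightarrow> 0 < 1 + (l *\<^sub>R \<theta>) \<bullet> T x"
      by (intro AE_I2 impI) (auto simp: S_def supp_q_def w_def dest: escort_restr_nonzero_imp_mem)
  qed
  then show ?thesis
    unfolding w_def S_def by (intro coupling_finite) simp
qed

end
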